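(* Let $\Lambda=[m,n]\cap\mathbb Z$, let $(\nu_j)$ be real, and let $m\le l\le r\le n$. Then for all $t\in\mathbb R$, $$\|[c_l(t),a_r^*]\|\ge|\langle e^{-2itH^\Lambda_{\rm eff}}\delta_l,\delta_r\rangle|,$$ where $c_l(t)=e^{itH_\Lambda}c_le^{-itH_\Lambda}$.
   Context: $\mathfrak G_\Lambda=\bigotimes_{j=m}^n\mathbb C^2$; $\sigma_j^{x,y,z}$ are the Pauli matrices $\begin{pmatrix}0&1\\1&0\end{pmatrix},\begin{pmatrix}0&-i\\i&0\end{pmatrix},\begin{pmatrix}1&0\\0&-1\end{pmatrix}$ acting on factor $j$. $H_\Lambda=-\sum_{j=m}^{n-1}(\sigma^x_j\sigma^x_{j+1}+\sigma^y_j\sigma^y_{j+1})-\sum_{j=m}^n\nu_j\sigma^z_j$. Define $a_j^*=\frac12(\sigma^x_j+i\sigma^y_j)$, $a_j=\frac12(\sigma^x_j-i\sigma^y_j)$, and the Jordan–Wigner operators $c_m=a_m$, $c_{m+j}=\sigma^z_m\sigma^z_{m+1}\cdots\sigma^z_{m+j-1}a_{m+j}$ for $1\le j\le n-m$. $H^\Lambda_{\rm eff}$ is the restriction of $(H_{\rm eff}\psi)_k=\psi_{k+1}+\psi_{k-1}+\nu_k\psi_k$ to $\ell^2([m,n]\cap\mathbb Z)$ (Dirichlet truncation), and $\delta_j$ are the standard basis vectors. *)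

theory Defs
  imports "HOL-Analysis.Analysis" "Jordan_Normal_Form.Matrix"
begin

definition pauli_x :: "complex mat" where
  "pauli_x = mat_of_rows_list 2 [[0, 1], [1, 0]]"
definition pauli_y :: "complex mat" where
  "pauli_y = mat_of_rows_list 2 [[0, -\<i>], [\<i>, 0]]"
definition pauli_z :: "complex mat" where
  "pauli_z = mat_of_rows_list 2 [[1, 0], [0, -1]]"

text \<open>A basis index b < 2^N encodes the product basis vector whose k-th factor
  (site m+k) is the (b div 2^k mod 2)-th standard basis vector of C^2.\<close>

definition nsites :: "int \<Rightarrow> int \<Rightarrow> nat" where
  "nsites m n = nat (n - m + 1)"

definition bitk :: "nat \<Rightarrow> nat \<Rightarrow> nat" where
  "bitk b k = (b div 2 ^ k) mod 2"

text \<open>The operator A (a 2x2 matrix) acting on tensor factor k, identity elsewhere.\<close>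
definition site_op :: "nat \<Rightarrow> nat \<Rightarrow> complex mat \<Rightarrow> complex mat" where
  "site_op N k A = mat (2 ^ N) (2 ^ N) (\<lambda>(i, j).
      if (\<forall>l<N. l \<noteq> k \<longrightarrow> bitk i l = bitk j l) then A $$ (bitk i k, bitk j k) else 0)"

definition sig :: "int \<Rightarrow> int \<Rightarrow> complex mat \<Rightarrow> int \<Rightarrow> complex mat" where
  "sig m n A j = site_op (nsites m n) (nat (j - m)) A"

definition a_op :: "int \<Rightarrow> int \<Rightarrow> int \<Rightarrow> complex mat" where
  "a_op m n j = (1/2 :: complex) \<cdot>\<^sub>m (sig m n pauli_x j - \<i> \<cdot>\<^sub>m sig m n pauli_y j)"

definition a_star :: "int \<Rightarrow> int \<Rightarrow> int \<Rightarrow> complex mat" where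
  "a_star m n j = (1/2 :: complex) \<cdot>\<^sub>m (sig m n pauli_x j + \<i> \<cdot>\<^sub>m sig m n pauli_y j)"

definition c_op :: "int \<Rightarrow> int \<Rightarrow> int \<Rightarrow> complex mat" where
  "c_op m n j = foldr (\<lambda>i M. sig m n pauli_z i * M) [m..j - 1] (a_op m n j)"

definition msum :: "nat \<Rightarrow> (int \<Rightarrow> complex mat) \<Rightarrow> int list \<Rightarrow> complex mat" where
  "msum D f xs = foldr (\<lambda>i M. f i + M) xs (0\<^sub>m D D)"

definition H_Lambda :: "int \<Rightarrow> int \<Rightarrow> (int \<Rightarrow> real) \<Rightarrow> complex mat" where
  "H_Lambda m n \<nu> =
     - msum (2 ^ nsites m n) (\<lambda>j. sig m n pauli_x j * sig m n pauli_x (j + 1)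
                                  + sig m n pauli_y j * sig m n pauli_y (j + 1)) [m..n - 1]
     - msum (2 ^ nsites m n) (\<lambda>j. complex_of_real (\<nu> j) \<cdot>\<^sub>m sig m n pauli_z j) [m..n]"

text \<open>Dirichlet restriction of \<open>(H_eff \<psi>)_k = \<psi>_{k+1} + \<psi>_{k-1} + \<nu>_k \<psi>_k\<close> to
  \<open>\<ell>^2([m,n] \<inter> \<int>)\<close>; row/column index i corresponds to site m+i.\<close>
definition H_eff :: "int \<Rightarrow> int \<Rightarrow> (int \<Rightarrow> real) \<Rightarrow> complex mat" where
  "H_eff m n \<nu> = mat (nsites m n) (nsites m n) (\<lambda>(i, j).
      if i = j then complex_of_real (\<nu> (m + int i))
      else if i = j + 1 \<or> j = i + 1 then 1 else 0)"

definition mexp :: "complex mat \<Rightarrow> complex mat" where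
  "mexp A = mat (dim_row A) (dim_row A) (\<lambda>(i, j). \<Sum>k. (A ^\<^sub>m k) $$ (i, j) / of_nat (fact k))"

definition vnorm :: "complex vec \<Rightarrow> real" where
  "vnorm v = sqrt (\<Sum>i<dim_vec v. (cmod (v $ i))\<^sup>2)"

definition opnorm :: "complex mat \<Rightarrow> real" where
  "opnorm A = Sup {vnorm (A *\<^sub>v v) | v. v \<in> carrier_vec (dim_col A) \<and> vnorm v \<le> 1}"

definition c_t :: "int \<Rightarrow> int \<Rightarrow> (int \<Rightarrow> real) \<Rightarrow> int \<Rightarrow> real \<Rightarrow> complex mat" where
  "c_t m n \<nu> l t = mexp ((\<i> * complex_of_real t) \<cdot>\<^sub>m H_Lambda m n \<nu>) * c_op m n l
                   * mexp ((- \<i> * complex_of_real t) \<cdot>\<^sub>m H_Lambda m n \<nu>)"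

end

theory Submission
  imports Defs
begin

text \<open>The vacuum \<open>\<Omega>\<close>, killed by every \<open>a\<^sub>j\<close>, is an eigenvector of \<open>H\<^sub>\<Lambda>\<close> with a real
  eigenvalue \<open>E\<^sub>0\<close>, and \<open>H\<^sub>\<Lambda>\<close> maps the span of the one-particle states \<open>a\<^sup>*\<^sub>j \<Omega>\<close> into
  itself, acting there as \<open>E\<^sub>0 - 2 H\<^sub>eff\<close>. Since \<open>c\<^sub>l \<Omega> = 0\<close> and \<open>c\<^sub>l a\<^sup>*\<^sub>j \<Omega> = \<plusminus>\<delta>\<^sub>l\<^sub>j \<Omega>\<close>,
  the commutator \<open>[c\<^sub>l(t), a\<^sup>*\<^sub>r]\<close> maps \<open>\<Omega>\<close> to a multiple of \<open>\<Omega>\<close> of modulus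
  \<open>|exp(2it H\<^sub>eff)\<^sub>l\<^sub>r|\<close>. This is \<open>|exp(-2it H\<^sub>eff)\<^sub>r\<^sub>l|\<close> because \<open>H\<^sub>eff\<close> is real symmetric,
  and testing the operator norm on the unit vector \<open>\<Omega>\<close> gives the bound.\<close>

section \<open>The matrix exponential\<close>

lemma index_mult_mat_sum:
  assumes "A \<in> carrier_mat a b" "B \<in> carrier_mat b c" "i < a" "j < c"
  shows "(A * B) $$ (i,j) = (\<Sum>k<b. A $$ (i,k) * B $$ (k,j))"
  using assms by (auto simp: scalar_prod_def lessThan_atLeast0 intro!: sum.cong)

lemma index_mult_mat_vec_sum:
  assumes "A \<in> carrier_mat a b" "v \<in> carrier_vec b" "i < a"
  shows "(A *\<^sub>v v) $ i = (\<Sum>k<b. A $$ (i,k) * v $ k)"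
  using assms by (auto simp: scalar_prod_def lessThan_atLeast0 intro!: sum.cong)

lemma index_mult_mat_vec_unit_vec:
  fixes M :: "'a :: semiring_1 mat"
  assumes "M \<in> carrier_mat a b" "j < b" "i < a"
  shows "(M *\<^sub>v unit_vec b j) $ i = M $$ (i,j)"
  using assms
  by (subst index_mult_mat_vec_sum[OF assms(1) _ assms(3)]) (auto simp: unit_vec_def if_distrib cong: if_cong)

definition mat_l1_norm :: "complex mat \<Rightarrow> real" where
  "mat_l1_norm A = (\<Sum>p<dim_row A. \<Sum>q<dim_col A. cmod (A $$ (p,q)))"

lemma norm_index_le_mat_l1_norm:
  assumes "A \<in> carrier_mat a b" "p < a" "q < b"
  shows "cmod (A $$ (p,q)) \<le> mat_l1_norm A"
proof -
  have "cmod (A $$ (p,q)) \<le> (\<Sum>q'<b. cmod (A $$ (p,q')))"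
    using assms by (intro member_le_sum) auto
  also have "\<dots> \<le> (\<Sum>p'<a. \<Sum>q'<b. cmod (A $$ (p',q')))"
    using assms by (intro member_le_sum[where f = "\<lambda>p'. \<Sum>q'<b. cmod (A $$ (p',q'))"]) (auto intro: sum_nonneg)
  finally show ?thesis using assms by (simp add: mat_l1_norm_def)
qed

lemma mat_l1_norm_nonneg: "0 \<le> mat_l1_norm A"
  unfolding mat_l1_norm_def by (intro sum_nonneg) auto

lemma norm_index_pow_mat_le:
  fixes A :: "complex mat"
  assumes A: "A \<in> carrier_mat D D" and "i < D" "j < D"
  shows "cmod ((A ^\<^sub>m k) $$ (i,j)) \<le> (real D * mat_l1_norm A) ^ k"
  using assms(2,3)
proof (induction k arbitrary: i j)
  case 0 then show ?case using A by auto
next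
  case (Suc k)
  have "(A ^\<^sub>m Suc k) $$ (i,j) = (\<Sum>a<D. (A ^\<^sub>m k) $$ (i,a) * A $$ (a,j))"
    unfolding pow_mat.simps(2) by (rule index_mult_mat_sum) (use A Suc.prems in auto)
  also have "cmod \<dots> \<le> (\<Sum>a<D. cmod ((A ^\<^sub>m k) $$ (i,a)) * cmod (A $$ (a,j)))"
    by (rule order.trans[OF norm_sum]) (simp add: norm_mult)
  also have "\<dots> \<le> (\<Sum>a<D. (real D * mat_l1_norm A) ^ k * mat_l1_norm A)"
    using Suc.prems
    by (intro sum_mono mult_mono Suc.IH norm_index_le_mat_l1_norm[OF A]) (auto simp: mat_l1_norm_nonneg)
  also have "\<dots> = (real D * mat_l1_norm A) ^ Suc k" by (simp add: algebra_simps)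
  finally show ?case .
qed

lemma summable_norm_mexp_series:
  fixes A :: "complex mat"
  assumes A: "A \<in> carrier_mat D D" and ij: "i < D" "j < D"
  shows "summable (\<lambda>k. norm ((A ^\<^sub>m k) $$ (i,j) / of_nat (fact k)))"
proof (rule summable_comparison_test[OF _ summable_exp[of "real D * mat_l1_norm A"]])
  have "norm ((A ^\<^sub>m k) $$ (i,j) / of_nat (fact k)) \<le> inverse (fact k) * (real D * mat_l1_norm A) ^ k"
    for k
    using divide_right_mono[OF norm_index_pow_mat_le[OF A ij], of "fact k" k]
    by (simp add: norm_divide field_simps)
  then show "\<exists>N. \<forall>k\<ge>N. norm (norm ((A ^\<^sub>m k) $$ (i,j) / of_nat (fact k)))
      \<le> inverse (fact k) * (real D * mat_l1_norm A) ^ k"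
    by auto
qed

lemma summable_mexp_series:
  fixes A :: "complex mat"
  assumes "A \<in> carrier_mat D D" "i < D" "j < D"
  shows "summable (\<lambda>k. (A ^\<^sub>m k) $$ (i,j) / of_nat (fact k))"
  using summable_norm_cancel[OF summable_norm_mexp_series[OF assms]] .

lemma index_mexp:
  "A \<in> carrier_mat D D \<Longrightarrow> i < D \<Longrightarrow> j < D \<Longrightarrow>
   mexp A $$ (i,j) = (\<Sum>k. (A ^\<^sub>m k) $$ (i,j) / of_nat (fact k))"
  by (simp add: mexp_def)

lemma mexp_carrier [simp]: "A \<in> carrier_mat D D \<Longrightarrow> mexp A \<in> carrier_mat D D"
  by (simp add: mexp_def)

lemma pow_mat_intertwine:
  fixes A :: "'a :: semiring_1 mat"
  assumes A: "A \<in> carrier_mat D D" and P: "P \<in> carrier_mat D d" and K: "K \<in> carrier_mat d d"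
    and AP: "A * P = P * K"
  shows "A ^\<^sub>m k * P = P * K ^\<^sub>m k"
proof (induction k)
  case 0 then show ?case using A P K by simp
next
  case (Suc k)
  have "A ^\<^sub>m Suc k * P = A ^\<^sub>m k * (A * P)"
    using A P by (simp add: assoc_mult_mat[of _ D D _ D _ d])
  also have "\<dots> = (A ^\<^sub>m k * P) * K"
    using A P K by (simp add: AP assoc_mult_mat[of _ D D _ d _ d])
  also have "\<dots> = P * (K ^\<^sub>m k * K)"
    using Suc P K by (simp add: assoc_mult_mat[of _ D d _ d _ d])
  finally show ?case by simp
qed

lemma mexp_intertwine:
  assumes A: "A \<in> carrier_mat D D" and P: "P \<in> carrier_mat D d" and K: "K \<in> carrier_mat d d"
    and AP: "A * P = P * K"
  shows "mexp A * P = P * mexp K"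
proof (rule eq_matI)
  fix i j assume "i < dim_row (P * mexp K)" "j < dim_col (P * mexp K)"
  then have i: "i < D" and j: "j < d" using P K by (auto simp: mexp_def)
  have "(mexp A * P) $$ (i,j) = (\<Sum>a<D. (\<Sum>k. (A ^\<^sub>m k) $$ (i,a) / of_nat (fact k)) * P $$ (a,j))"
    using A P i j by (simp add: index_mult_mat_sum[of _ D D _ d] index_mexp)
  also have "\<dots> = (\<Sum>a<D. \<Sum>k. (A ^\<^sub>m k) $$ (i,a) / of_nat (fact k) * P $$ (a,j))"
    using A i by (intro sum.cong refl suminf_mult2 summable_mexp_series) auto
  also have "\<dots> = (\<Sum>k. \<Sum>a<D. (A ^\<^sub>m k) $$ (i,a) / of_nat (fact k) * P $$ (a,j))"
    using A i by (intro suminf_sum[symmetric] summable_mult2 summable_mexp_series) auto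
  also have "\<dots> = (\<Sum>k. (A ^\<^sub>m k * P) $$ (i,j) / of_nat (fact k))"
    by (intro suminf_cong, subst index_mult_mat_sum[OF pow_carrier_mat[OF A] P i j])
      (simp add: sum_divide_distrib)
  also have "\<dots> = (\<Sum>k. (P * K ^\<^sub>m k) $$ (i,j) / of_nat (fact k))"
    by (simp add: pow_mat_intertwine[OF A P K AP])
  also have "\<dots> = (\<Sum>k. \<Sum>b<d. P $$ (i,b) * ((K ^\<^sub>m k) $$ (b,j) / of_nat (fact k)))"
    by (intro suminf_cong, subst index_mult_mat_sum[OF P pow_carrier_mat[OF K] i j])
      (simp add: sum_divide_distrib)
  also have "\<dots> = (\<Sum>b<d. P $$ (i,b) * (\<Sum>k. (K ^\<^sub>m k) $$ (b,j) / of_nat (fact k)))"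
  proof -
    have "(\<Sum>k. \<Sum>b<d. P $$ (i,b) * ((K ^\<^sub>m k) $$ (b,j) / of_nat (fact k)))
        = (\<Sum>b<d. \<Sum>k. P $$ (i,b) * ((K ^\<^sub>m k) $$ (b,j) / of_nat (fact k)))"
      using K j by (intro suminf_sum summable_mult summable_mexp_series) auto
    also have "\<dots> = (\<Sum>b<d. P $$ (i,b) * (\<Sum>k. (K ^\<^sub>m k) $$ (b,j) / of_nat (fact k)))"
      using K j by (intro sum.cong refl suminf_mult summable_mexp_series) auto
    finally show ?thesis .
  qed
  also have "\<dots> = (P * mexp K) $$ (i,j)"
    using K P i j by (simp add: index_mult_mat_sum[of _ D d _ d] index_mexp)
  finally show "(mexp A * P) $$ (i,j) = (P * mexp K) $$ (i,j)" .
qed (use A P K in \<open>auto simp: mexp_def\<close>)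

lemma exp_complex_series: "(\<Sum>k. c ^ k / fact k) = exp (c :: complex)"
proof -
  have "(\<lambda>k. c ^ k /\<^sub>R fact k) sums exp c" by (rule exp_converges)
  then have "(\<lambda>k. c ^ k / fact k) sums exp c"
    by (simp add: scaleR_conv_of_real divide_inverse mult.commute)
  then show ?thesis by (rule sums_unique[symmetric])
qed

lemma pow_mat_1x1: "mat 1 1 (\<lambda>_. c :: 'a :: comm_semiring_1) ^\<^sub>m k = mat 1 1 (\<lambda>_. c ^ k)"
proof (induction k)
  case (Suc k)
  then show ?case by (auto intro!: eq_matI simp: scalar_prod_def algebra_simps)
qed (auto intro!: eq_matI)

lemma mexp_1x1: "mexp (mat 1 1 (\<lambda>_. c)) = mat 1 1 (\<lambda>_. exp c)"
  unfolding mexp_def pow_mat_1x1 by (auto intro!: eq_matI simp: exp_complex_series)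

lemma mexp_mult_eigenvector:
  assumes A: "A \<in> carrier_mat D D" and v: "v \<in> carrier_vec D" and Av: "A *\<^sub>v v = c \<cdot>\<^sub>v v"
  shows "mexp A *\<^sub>v v = exp c \<cdot>\<^sub>v v"
proof -
  let ?P = "mat_of_cols D [v]" and ?K = "mat 1 1 (\<lambda>_. c)"
  have P: "?P \<in> carrier_mat D 1" using mat_of_cols_carrier(1)[of D "[v]"] by simp
  have "A * ?P = ?P * ?K"
  proof (rule eq_matI)
    fix i j assume "i < dim_row (?P * ?K)" "j < dim_col (?P * ?K)"
    then have i: "i < D" and j: "j = 0" by auto
    have "(A * ?P) $$ (i,0) = (A *\<^sub>v v) $ i" using A v i by simp
    also have "\<dots> = v $ i * c" using v i by (simp add: Av)
    also have "\<dots> = (?P * ?K) $$ (i,0)" using v i by (simp add: scalar_prod_def mat_of_cols_def)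
    finally show "(A * ?P) $$ (i,j) = (?P * ?K) $$ (i,j)" using j by simp
  qed (use A in auto)
  then have "mexp A * ?P = ?P * mexp ?K"
    by (intro mexp_intertwine[OF A P]) auto
  then have "mexp A * ?P = ?P * mat 1 1 (\<lambda>_. exp c)"
    by (simp only: mexp_1x1)
  moreover have "mexp A *\<^sub>v v = col (mexp A * ?P) 0"
    using col_mult2[OF mexp_carrier[OF A] P, of 0] v by simp
  moreover have "col (?P * mat 1 1 (\<lambda>_. exp c)) 0 = exp c \<cdot>\<^sub>v v"
    using v by (auto intro!: eq_vecI simp: scalar_prod_def mat_of_cols_def)
  ultimately show ?thesis by simp
qed

lemma pascal_sum_step:
  fixes f :: "nat \<Rightarrow> 'a :: comm_semiring_1"
  shows "(\<Sum>p\<le>k. of_nat (k choose p) * c^(k-p) * f (Suc p)) + c * (\<Sum>p\<le>k. of_nat (k choose p) * c^(k-p) * f p)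
       = (\<Sum>p\<le>Suc k. of_nat (Suc k choose p) * c^(Suc k - p) * f p)"
proof -
  have "c * (\<Sum>p\<le>k. of_nat (k choose p) * c^(k-p) * f p) = (\<Sum>p\<le>k. of_nat (k choose p) * c^(Suc k-p) * f p)"
    by (simp add: sum_distrib_left algebra_simps Suc_diff_le)
  also have "\<dots> = (\<Sum>p\<le>Suc k. of_nat (k choose p) * c^(Suc k-p) * f p)"
    by (simp add: binomial_eq_0)
  also have "\<dots> = c^Suc k * f 0 + (\<Sum>p\<le>k. of_nat (k choose Suc p) * c^(k-p) * f (Suc p))"
    by (subst sum.atMost_Suc_shift) simp
  moreover have "(\<Sum>p\<le>Suc k. of_nat (Suc k choose p) * c^(Suc k - p) * f p)
     = c^Suc k * f 0 + (\<Sum>p\<le>k. of_nat (k choose p) * c^(k-p) * f (Suc p))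
        + (\<Sum>p\<le>k. of_nat (k choose Suc p) * c^(k-p) * f (Suc p))"
    by (subst sum.atMost_Suc_shift) (simp add: sum.distrib algebra_simps)
  ultimately show ?thesis by (simp add: algebra_simps)
qed

lemma index_pow_mat_add_scalar:
  fixes A :: "'a :: comm_semiring_1 mat"
  assumes A: "A \<in> carrier_mat D D" and i: "i < D" and j: "j < D"
  shows "((A + c \<cdot>\<^sub>m 1\<^sub>m D) ^\<^sub>m k) $$ (i,j) = (\<Sum>p\<le>k. of_nat (k choose p) * c^(k-p) * (A ^\<^sub>m p) $$ (i,j))"
  using j
proof (induction k arbitrary: j)
  case 0 then show ?case using A i by simp
next
  case (Suc k)
  let ?M = "A + c \<cdot>\<^sub>m 1\<^sub>m D"
  have M: "?M \<in> carrier_mat D D" using A by simp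
  have step: "(B ^\<^sub>m Suc q) $$ (i,j) = (\<Sum>a<D. (B ^\<^sub>m q) $$ (i,a) * B $$ (a,j))"
    if "B \<in> carrier_mat D D" for B :: "'a mat" and q
    unfolding pow_mat.simps(2) by (rule index_mult_mat_sum) (use that i Suc.prems in auto)
  have "(?M ^\<^sub>m Suc k) $$ (i,j)
      = (\<Sum>a<D. (?M ^\<^sub>m k) $$ (i,a) * A $$ (a,j) + (if a = j then c * (?M ^\<^sub>m k) $$ (i,a) else 0))"
    unfolding step[OF M] using A Suc.prems by (intro sum.cong refl) (auto simp: algebra_simps)
  also have "\<dots> = (\<Sum>a<D. (?M ^\<^sub>m k) $$ (i,a) * A $$ (a,j)) + c * (?M ^\<^sub>m k) $$ (i,j)"
    using Suc.prems by (simp add: sum.distrib)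
  also have "(\<Sum>a<D. (?M ^\<^sub>m k) $$ (i,a) * A $$ (a,j))
      = (\<Sum>p\<le>k. of_nat (k choose p) * c^(k-p) * (\<Sum>a<D. (A ^\<^sub>m p) $$ (i,a) * A $$ (a,j)))"
    by (simp add: Suc.IH sum_distrib_left sum_distrib_right mult_ac, subst sum.swap) simp
  also have "\<dots> = (\<Sum>p\<le>k. of_nat (k choose p) * c^(k-p) * (A ^\<^sub>m Suc p) $$ (i,j))"
    by (simp only: step[OF A])
  finally show ?case
    using pascal_sum_step[of k c "\<lambda>p. (A ^\<^sub>m p) $$ (i,j)"] Suc.IH Suc.prems by simp
qed

lemma mexp_add_scalar:
  assumes A: "A \<in> carrier_mat D D"
  shows "mexp (A + c \<cdot>\<^sub>m 1\<^sub>m D) = exp c \<cdot>\<^sub>m mexp A"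
proof (rule eq_matI)
  fix i j assume "i < dim_row (exp c \<cdot>\<^sub>m mexp A)" "j < dim_col (exp c \<cdot>\<^sub>m mexp A)"
  then have i: "i < D" and j: "j < D" using A by (auto simp: mexp_def)
  let ?a = "\<lambda>p. (A ^\<^sub>m p) $$ (i,j) / of_nat (fact p)"
  let ?b = "\<lambda>q. c ^ q / fact q"
  have "norm (?b k) = inverse (fact k) * cmod c ^ k" for k
    by (simp add: norm_divide norm_power divide_inverse mult.commute norm_mult norm_inverse)
  then have sb: "summable (\<lambda>k. norm (?b k))"
    using summable_exp[of "cmod c"] by simp
  have "mexp (A + c \<cdot>\<^sub>m 1\<^sub>m D) $$ (i,j) = (\<Sum>k. ((A + c \<cdot>\<^sub>m 1\<^sub>m D) ^\<^sub>m k) $$ (i,j) / of_nat (fact k))"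
    using A i j by (intro index_mexp) auto
  also have "\<dots> = (\<Sum>k. \<Sum>p\<le>k. ?a p * ?b (k - p))"
  proof (intro suminf_cong)
    fix k
    have "(of_nat (k choose p) :: complex) = fact k / (fact p * fact (k - p))" if "p \<le> k" for p
      by (rule binomial_fact[OF that])
    then show "((A + c \<cdot>\<^sub>m 1\<^sub>m D) ^\<^sub>m k) $$ (i,j) / of_nat (fact k) = (\<Sum>p\<le>k. ?a p * ?b (k - p))"
      unfolding index_pow_mat_add_scalar[OF A i j] sum_divide_distrib
      by (intro sum.cong refl) (simp add: field_simps)
  qed
  also have "\<dots> = (\<Sum>k. ?a k) * (\<Sum>k. ?b k)"
    by (rule Cauchy_product[OF summable_norm_mexp_series[OF A i j] sb, symmetric])
  also have "\<dots> = (exp c \<cdot>\<^sub>m mexp A) $$ (i,j)"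
    using A i j by (simp add: index_mexp exp_complex_series mexp_def)
  finally show "mexp (A + c \<cdot>\<^sub>m 1\<^sub>m D) $$ (i,j) = (exp c \<cdot>\<^sub>m mexp A) $$ (i,j)" .
qed (use A in \<open>auto simp: mexp_def\<close>)

definition hermitian_mat :: "complex mat \<Rightarrow> bool" where
  "hermitian_mat H \<longleftrightarrow> (\<forall>p<dim_row H. \<forall>q<dim_col H. H $$ (q,p) = cnj (H $$ (p,q)))"

lemma pow_mat_Suc_left:
  assumes A: "A \<in> carrier_mat D D"
  shows "A ^\<^sub>m Suc k = A * A ^\<^sub>m k"
proof (induction k)
  case 0 then show ?case using A by simp
next
  case (Suc k)
  have "A ^\<^sub>m Suc (Suc k) = (A * A ^\<^sub>m k) * A" using Suc by simp
  also have "\<dots> = A * (A ^\<^sub>m k * A)" using A by (simp add: assoc_mult_mat[of _ D D _ D _ D])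
  finally show ?case by simp
qed

lemma hermitian_matI:
  "(\<And>p q. p < dim_row H \<Longrightarrow> q < dim_col H \<Longrightarrow> H $$ (q,p) = cnj (H $$ (p,q))) \<Longrightarrow> hermitian_mat H"
  by (simp add: hermitian_mat_def)

lemma hermitian_matD:
  "hermitian_mat H \<Longrightarrow> p < dim_row H \<Longrightarrow> q < dim_col H \<Longrightarrow> H $$ (q,p) = cnj (H $$ (p,q))"
  by (simp add: hermitian_mat_def)

lemma hermitian_pow_mat:
  assumes H: "H \<in> carrier_mat D D" and herm: "hermitian_mat H"
  shows "hermitian_mat (H ^\<^sub>m k)"
proof (induction k)
  case 0 then show ?case using H by (auto intro: hermitian_matI)
next
  case (Suc k)
  show ?case
  proof (rule hermitian_matI)
    fix p q assume "p < dim_row (H ^\<^sub>m Suc k)" "q < dim_col (H ^\<^sub>m Suc k)"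
    then have p: "p < D" and q: "q < D" using H by auto
    have "(H ^\<^sub>m Suc k) $$ (q,p) = (\<Sum>a<D. (H ^\<^sub>m k) $$ (q,a) * H $$ (a,p))"
      unfolding pow_mat.simps(2) by (rule index_mult_mat_sum) (use H p q in auto)
    also have "\<dots> = (\<Sum>a<D. cnj (H $$ (p,a) * (H ^\<^sub>m k) $$ (a,q)))"
    proof (intro sum.cong refl)
      fix a assume "a \<in> {..<D}"
      then show "(H ^\<^sub>m k) $$ (q,a) * H $$ (a,p) = cnj (H $$ (p,a) * (H ^\<^sub>m k) $$ (a,q))"
        using hermitian_matD[OF Suc.IH, of a q] hermitian_matD[OF herm, of p a] H p q by simp
    qed
    also have "\<dots> = cnj ((H * H ^\<^sub>m k) $$ (p,q))"
      by (subst index_mult_mat_sum[OF H pow_carrier_mat[OF H] p q]) (simp add: cnj_sum)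
    finally show "(H ^\<^sub>m Suc k) $$ (q,p) = cnj ((H ^\<^sub>m Suc k) $$ (p,q))"
      by (simp only: pow_mat_Suc_left[OF H])
  qed
qed

lemma pow_smult_mat:
  fixes A :: "'a :: comm_semiring_1 mat"
  assumes A: "A \<in> carrier_mat D D"
  shows "(s \<cdot>\<^sub>m A) ^\<^sub>m k = s ^ k \<cdot>\<^sub>m A ^\<^sub>m k"
proof (induction k)
  case 0 then show ?case using A by (auto intro!: eq_matI)
next
  case (Suc k)
  have "(s \<cdot>\<^sub>m A) ^\<^sub>m Suc k = (s ^ k \<cdot>\<^sub>m A ^\<^sub>m k) * (s \<cdot>\<^sub>m A)" using Suc by simp
  also have "\<dots> = s ^ Suc k \<cdot>\<^sub>m (A ^\<^sub>m k * A)"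
    using A by (auto intro!: eq_matI simp: scalar_prod_def sum_distrib_left algebra_simps)
  finally show ?case by simp
qed

lemma index_mexp_cnj_smult_hermitian:
  assumes H: "H \<in> carrier_mat D D" and herm: "hermitian_mat H" and pq: "p < D" "q < D"
  shows "mexp (cnj s \<cdot>\<^sub>m H) $$ (p,q) = cnj (mexp (s \<cdot>\<^sub>m H) $$ (q,p))"
proof -
  have sH: "s \<cdot>\<^sub>m H \<in> carrier_mat D D" and sH': "cnj s \<cdot>\<^sub>m H \<in> carrier_mat D D"
    using H by simp_all
  have "mexp (cnj s \<cdot>\<^sub>m H) $$ (p,q) = (\<Sum>k. cnj s ^ k * (H ^\<^sub>m k) $$ (p,q) / of_nat (fact k))"
    using H pq by (simp add: index_mexp[OF sH' pq] pow_smult_mat)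
  also have "\<dots> = (\<Sum>k. cnj (s ^ k * (H ^\<^sub>m k) $$ (q,p) / of_nat (fact k)))"
  proof -
    have "(H ^\<^sub>m k) $$ (p,q) = cnj ((H ^\<^sub>m k) $$ (q,p))" for k
      using hermitian_matD[OF hermitian_pow_mat[OF H herm, of k], of q p] H pq by simp
    then show ?thesis by simp
  qed
  also have "\<dots> = cnj (\<Sum>k. s ^ k * (H ^\<^sub>m k) $$ (q,p) / of_nat (fact k))"
  proof (rule sums_unique[symmetric], subst sums_cnj, rule summable_sums)
    show "summable (\<lambda>k. s ^ k * (H ^\<^sub>m k) $$ (q,p) / of_nat (fact k))"
      using summable_mexp_series[OF sH pq(2,1)] H pq by (simp add: pow_smult_mat)
  qed
  also have "\<dots> = cnj (mexp (s \<cdot>\<^sub>m H) $$ (q,p))"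
    using H pq by (simp add: index_mexp[OF sH pq(2,1)] pow_smult_mat)
  finally show ?thesis .
qed

lemma vnorm_eq_L2_set: "vnorm v = L2_set (\<lambda>i. cmod (v $ i)) {..<dim_vec v}"
  by (simp add: vnorm_def L2_set_def)

lemma norm_index_le_vnorm: "j < dim_vec v \<Longrightarrow> cmod (v $ j) \<le> vnorm v"
  unfolding vnorm_eq_L2_set by (rule member_le_L2_set) auto

lemma vnorm_mult_mat_vec_le:
  assumes X: "X \<in> carrier_mat D D" and w: "w \<in> carrier_vec D" and "vnorm w \<le> 1"
  shows "vnorm (X *\<^sub>v w) \<le> mat_l1_norm X"
proof -
  have "vnorm (X *\<^sub>v w) \<le> (\<Sum>i<D. cmod ((X *\<^sub>v w) $ i))"
    unfolding vnorm_eq_L2_set using X by (simp del: index_mult_mat_vec add: L2_set_le_sum)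
  also have "\<dots> \<le> (\<Sum>i<D. \<Sum>j<D. cmod (X $$ (i,j)))"
  proof (rule sum_mono)
    fix i assume "i \<in> {..<D}"
    then have i: "i < D" by simp
    have "cmod ((X *\<^sub>v w) $ i) \<le> (\<Sum>j<D. cmod (X $$ (i,j)) * cmod (w $ j))"
      unfolding index_mult_mat_vec_sum[OF X w i] by (rule order.trans[OF norm_sum]) (simp add: norm_mult)
    also have "\<dots> \<le> (\<Sum>j<D. cmod (X $$ (i,j)))"
      using norm_index_le_vnorm[of _ w] w \<open>vnorm w \<le> 1\<close>
      by (intro sum_mono mult_left_le) fastforce+
    finally show "cmod ((X *\<^sub>v w) $ i) \<le> (\<Sum>j<D. cmod (X $$ (i,j)))" .
  qed
  finally show ?thesis using X by (simp add: mat_l1_norm_def)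
qed

lemma vnorm_le_opnorm:
  assumes X: "X \<in> carrier_mat D D" and v: "v \<in> carrier_vec D" and "vnorm v \<le> 1"
  shows "vnorm (X *\<^sub>v v) \<le> opnorm X"
  unfolding opnorm_def
proof (rule cSup_upper)
  show "vnorm (X *\<^sub>v v) \<in> {vnorm (X *\<^sub>v v) |v. v \<in> carrier_vec (dim_col X) \<and> vnorm v \<le> 1}"
    using assms by auto
  show "bdd_above {vnorm (X *\<^sub>v v) |v. v \<in> carrier_vec (dim_col X) \<and> vnorm v \<le> 1}"
    unfolding bdd_above_def using vnorm_mult_mat_vec_le[OF X] X by auto
qed

lemma vnorm_smult_unit_vec:
  assumes "b < D"
  shows "vnorm (z \<cdot>\<^sub>v unit_vec D b) = cmod z"
proof -
  have "(\<Sum>i<D. (cmod ((z \<cdot>\<^sub>v unit_vec D b) $ i))\<^sup>2) = (\<Sum>i<D. if i = b then (cmod z)\<^sup>2 else 0)"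
    using assms by (intro sum.cong refl) auto
  also have "\<dots> = (cmod z)\<^sup>2" using assms by (subst sum.delta) auto
  finally show ?thesis by (simp add: vnorm_def)
qed

section \<open>Single-site operators on basis vectors\<close>

lemma bitk_conv_bit: "bitk b k = of_bool (bit b k)"
  by (simp add: bitk_def bit_iff_odd odd_iff_mod_2_eq_one even_iff_mod_2_eq_zero)

lemma less_two_power_iff_bit: "(x :: nat) < 2 ^ N \<longleftrightarrow> (\<forall>l. bit x l \<longrightarrow> l < N)"
proof -
  have "x < 2 ^ N \<longleftrightarrow> take_bit N x = x" by (simp add: take_bit_nat_eq_self_iff)
  also have "\<dots> \<longleftrightarrow> (\<forall>l. bit x l \<longrightarrow> l < N)"
    by (auto simp: bit_eq_iff[of "take_bit N x" x] bit_take_bit_iff)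
  finally show ?thesis .
qed

lemma nat_eq_iff_bit_below:
  "(i :: nat) < 2 ^ N \<Longrightarrow> j < 2 ^ N \<Longrightarrow> i = j \<longleftrightarrow> (\<forall>l<N. bit i l = bit j l)"
  unfolding less_two_power_iff_bit by (auto simp: bit_eq_iff[of i j])

lemma set_bit_less_two_power: "k < N \<Longrightarrow> (b :: nat) < 2 ^ N \<Longrightarrow> set_bit k b < 2 ^ N"
  unfolding less_two_power_iff_bit by (auto simp: bit_set_bit_iff)

lemma unset_bit_less_two_power: "(b :: nat) < 2 ^ N \<Longrightarrow> unset_bit k b < 2 ^ N"
  unfolding less_two_power_iff_bit by (auto simp: bit_unset_bit_iff)

lemma set_bit_self: "bit (b :: nat) k \<Longrightarrow> set_bit k b = b"
  by (simp add: set_bit_eq)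

lemma unset_bit_self: "\<not> bit (b :: nat) k \<Longrightarrow> unset_bit k b = b"
  by (rule bit_eqI) (auto simp: bit_unset_bit_iff)

lemma site_op_carrier [simp]: "site_op N k A \<in> carrier_mat (2 ^ N) (2 ^ N)"
  by (simp add: site_op_def)

lemma dim_site_op [simp]: "dim_row (site_op N k A) = 2 ^ N" "dim_col (site_op N k A) = 2 ^ N"
  by (simp_all add: site_op_def)

lemma index_site_op_mult_unit_vec:
  assumes k: "k < N" and b: "b < 2 ^ N" and i: "i < 2 ^ N"
  shows "(site_op N k A *\<^sub>v unit_vec (2 ^ N) b) $ i
     = (if i = unset_bit k b then A $$ (0, bitk b k) else 0) + (if i = set_bit k b then A $$ (1, bitk b k) else 0)"
proof -
  have u: "i = unset_bit k b \<longleftrightarrow> \<not> bit i k \<and> (\<forall>l<N. l \<noteq> k \<longrightarrow> bit i l = bit b l)"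
    unfolding nat_eq_iff_bit_below[OF i unset_bit_less_two_power[OF b]] bit_unset_bit_iff using k by blast
  have s: "i = set_bit k b \<longleftrightarrow> bit i k \<and> (\<forall>l<N. l \<noteq> k \<longrightarrow> bit i l = bit b l)"
    unfolding nat_eq_iff_bit_below[OF i set_bit_less_two_power[OF k b]] bit_set_bit_iff
    using k possible_bit_nat by blast
  have "(site_op N k A *\<^sub>v unit_vec (2 ^ N) b) $ i = site_op N k A $$ (i,b)"
    by (rule index_mult_mat_vec_unit_vec) (use b i in auto)
  also have "\<dots> = (if \<forall>l<N. l \<noteq> k \<longrightarrow> bit i l = bit b l then A $$ (bitk i k, bitk b k) else 0)"
    unfolding site_op_def index_mat[OF i b] case_prod_conv bitk_conv_bit of_bool_eq_iff ..
  finally have e: "(site_op N k A *\<^sub>v unit_vec (2 ^ N) b) $ i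
      = (if \<forall>l<N. l \<noteq> k \<longrightarrow> bit i l = bit b l then A $$ (bitk i k, bitk b k) else 0)" .
  show ?thesis
  proof (cases "bit i k")
    case True
    then have "i \<noteq> unset_bit k b" "(i = set_bit k b) = (\<forall>l<N. l \<noteq> k \<longrightarrow> bit i l = bit b l)"
      "bitk i k = 1"
      using u s by (auto simp: bitk_conv_bit)
    then show ?thesis unfolding e by auto
  next
    case False
    then have "i \<noteq> set_bit k b" "(i = unset_bit k b) = (\<forall>l<N. l \<noteq> k \<longrightarrow> bit i l = bit b l)"
      "bitk i k = 0"
      using u s by (auto simp: bitk_conv_bit)
    then show ?thesis unfolding e by auto
  qed
qed

lemma site_op_mult_unit_vec:
  assumes k: "k < N" and b: "b < 2 ^ N"
  shows "site_op N k A *\<^sub>v unit_vec (2 ^ N) b =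
    (if bit b k then A $$ (0,1) \<cdot>\<^sub>v unit_vec (2 ^ N) (unset_bit k b) + A $$ (1,1) \<cdot>\<^sub>v unit_vec (2 ^ N) b
     else A $$ (0,0) \<cdot>\<^sub>v unit_vec (2 ^ N) b + A $$ (1,0) \<cdot>\<^sub>v unit_vec (2 ^ N) (set_bit k b))"
proof (rule eq_vecI)
  fix i assume "i < dim_vec (if bit b k
      then A $$ (0,1) \<cdot>\<^sub>v unit_vec (2 ^ N) (unset_bit k b) + A $$ (1,1) \<cdot>\<^sub>v unit_vec (2 ^ N) b
      else A $$ (0,0) \<cdot>\<^sub>v unit_vec (2 ^ N) b + A $$ (1,0) \<cdot>\<^sub>v unit_vec (2 ^ N) (set_bit k b))"
  then have i: "i < 2 ^ N" by (auto split: if_splits)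
  then show "(site_op N k A *\<^sub>v unit_vec (2 ^ N) b) $ i = (if bit b k
      then A $$ (0,1) \<cdot>\<^sub>v unit_vec (2 ^ N) (unset_bit k b) + A $$ (1,1) \<cdot>\<^sub>v unit_vec (2 ^ N) b
      else A $$ (0,0) \<cdot>\<^sub>v unit_vec (2 ^ N) b + A $$ (1,0) \<cdot>\<^sub>v unit_vec (2 ^ N) (set_bit k b)) $ i"
    unfolding index_site_op_mult_unit_vec[OF k b i]
    using set_bit_less_two_power[OF k b] unset_bit_less_two_power[OF b] b
    by (cases "bit b k") (auto simp: bitk_conv_bit set_bit_self unset_bit_self)
qed auto

definition sigma_minus :: "complex mat" where
  "sigma_minus = mat_of_rows_list 2 [[0, 0], [1, 0]]"

definition sigma_plus :: "complex mat" where
  "sigma_plus = mat_of_rows_list 2 [[0, 1], [0, 0]]"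

lemmas single_site_mat_defs =
  pauli_x_def pauli_y_def pauli_z_def sigma_minus_def sigma_plus_def mat_of_rows_list_def

definition flip_bit :: "nat \<Rightarrow> nat \<Rightarrow> nat" where
  "flip_bit k b = (if bit b k then unset_bit k b else set_bit k b)"

lemma flip_bit_less_two_power: "k < N \<Longrightarrow> b < 2 ^ N \<Longrightarrow> flip_bit k b < 2 ^ N"
  by (simp add: flip_bit_def set_bit_less_two_power unset_bit_less_two_power)

lemma bit_flip_bit: "bit (flip_bit k b) l = (if l = k then \<not> bit b k else bit b l)"
  by (auto simp: flip_bit_def bit_set_bit_iff bit_unset_bit_iff)

lemma site_op_pauli_x_mult_unit_vec:
  "k < N \<Longrightarrow> b < 2 ^ N \<Longrightarrow>
   site_op N k pauli_x *\<^sub>v unit_vec (2 ^ N) b = unit_vec (2 ^ N) (flip_bit k b)"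
  by (subst site_op_mult_unit_vec) (auto simp: single_site_mat_defs flip_bit_def intro!: eq_vecI)

lemma site_op_pauli_y_mult_unit_vec:
  "k < N \<Longrightarrow> b < 2 ^ N \<Longrightarrow>
   site_op N k pauli_y *\<^sub>v unit_vec (2 ^ N) b
     = (if bit b k then - \<i> else \<i>) \<cdot>\<^sub>v unit_vec (2 ^ N) (flip_bit k b)"
  by (subst site_op_mult_unit_vec) (auto simp: single_site_mat_defs flip_bit_def intro!: eq_vecI)

lemma site_op_pauli_z_mult_unit_vec:
  "k < N \<Longrightarrow> b < 2 ^ N \<Longrightarrow>
   site_op N k pauli_z *\<^sub>v unit_vec (2 ^ N) b = (if bit b k then - 1 else 1) \<cdot>\<^sub>v unit_vec (2 ^ N) b"
  by (subst site_op_mult_unit_vec) (auto simp: single_site_mat_defs intro!: eq_vecI)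

lemma site_op_sigma_minus_mult_unit_vec:
  "k < N \<Longrightarrow> b < 2 ^ N \<Longrightarrow>
   site_op N k sigma_minus *\<^sub>v unit_vec (2 ^ N) b
     = (if bit b k then 0\<^sub>v (2 ^ N) else unit_vec (2 ^ N) (set_bit k b))"
  by (subst site_op_mult_unit_vec) (auto simp: single_site_mat_defs intro!: eq_vecI)

lemma site_op_sigma_plus_mult_unit_vec:
  "k < N \<Longrightarrow> b < 2 ^ N \<Longrightarrow>
   site_op N k sigma_plus *\<^sub>v unit_vec (2 ^ N) b
     = (if bit b k then unit_vec (2 ^ N) (unset_bit k b) else 0\<^sub>v (2 ^ N))"
  by (subst site_op_mult_unit_vec) (auto simp: single_site_mat_defs intro!: eq_vecI)

lemma bitk_cases: "bitk i k = 0 \<or> bitk i k = 1"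
  by (simp add: bitk_conv_bit)

lemma a_op_eq_sig_sigma_minus: "a_op m n j = sig m n sigma_minus j"
proof (rule eq_matI)
  fix i i' assume "i < dim_row (sig m n sigma_minus j)" "i' < dim_col (sig m n sigma_minus j)"
  then show "a_op m n j $$ (i,i') = sig m n sigma_minus j $$ (i,i')"
    using bitk_cases[of i "nat (j - m)"] bitk_cases[of i' "nat (j - m)"]
    by (auto simp: a_op_def sig_def site_op_def single_site_mat_defs)
qed (auto simp: a_op_def sig_def)

lemma a_star_eq_sig_sigma_plus: "a_star m n j = sig m n sigma_plus j"
proof (rule eq_matI)
  fix i i' assume "i < dim_row (sig m n sigma_plus j)" "i' < dim_col (sig m n sigma_plus j)"
  then show "a_star m n j $$ (i,i') = sig m n sigma_plus j $$ (i,i')"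
    using bitk_cases[of i "nat (j - m)"] bitk_cases[of i' "nat (j - m)"]
    by (auto simp: a_star_def sig_def site_op_def single_site_mat_defs)
qed (auto simp: a_star_def sig_def)

definition hopping :: "nat \<Rightarrow> nat \<Rightarrow> complex mat" where
  "hopping N k = site_op N k pauli_x * site_op N (Suc k) pauli_x
               + site_op N k pauli_y * site_op N (Suc k) pauli_y"

lemma hopping_mult_unit_vec:
  assumes k: "Suc k < N" and b: "b < 2 ^ N"
  shows "hopping N k *\<^sub>v unit_vec (2 ^ N) b =
     (if bit b k = bit b (Suc k) then 0\<^sub>v (2 ^ N)
      else 2 \<cdot>\<^sub>v unit_vec (2 ^ N) (flip_bit k (flip_bit (Suc k) b)))"
proof -
  let ?D = "2 ^ N :: nat" and ?b' = "flip_bit k (flip_bit (Suc k) b)"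
  have k': "k < N" using k by simp
  have f1: "flip_bit (Suc k) b < ?D" by (rule flip_bit_less_two_power[OF k b])
  have bk: "bit (flip_bit (Suc k) b) k = bit b k" by (simp add: bit_flip_bit)
  have "hopping N k *\<^sub>v unit_vec ?D b =
        site_op N k pauli_x *\<^sub>v (site_op N (Suc k) pauli_x *\<^sub>v unit_vec ?D b)
      + site_op N k pauli_y *\<^sub>v (site_op N (Suc k) pauli_y *\<^sub>v unit_vec ?D b)"
    unfolding hopping_def
    by (subst add_mult_distrib_mat_vec[of _ ?D ?D]) (auto simp: assoc_mult_mat_vec[of _ ?D ?D _ ?D])
  also have "\<dots> = unit_vec ?D ?b'
      + ((if bit b (Suc k) then - \<i> else \<i>) * (if bit b k then - \<i> else \<i>)) \<cdot>\<^sub>v unit_vec ?D ?b'"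
    using k k' b f1 bk
    by (simp add: site_op_pauli_x_mult_unit_vec site_op_pauli_y_mult_unit_vec
        mult_mat_vec[of _ ?D ?D] smult_smult_assoc)
  also have "\<dots> = (if bit b k = bit b (Suc k) then 0\<^sub>v ?D else 2 \<cdot>\<^sub>v unit_vec ?D ?b')"
    by (rule eq_vecI) auto
  finally show ?thesis .
qed

text \<open>The annihilator \<open>a\<^sub>j\<close> is \<open>sigma_minus\<close> at site \<open>j\<close>, which sets bit \<open>j\<close>. Hence the vacuum,
  killed by every \<open>a\<^sub>j\<close>, is the all-ones string, and \<open>a\<^sup>*\<^sub>j\<close> applied to it clears bit \<open>j\<close>.\<close>

abbreviation vacuum :: "nat \<Rightarrow> nat" where
  "vacuum N \<equiv> mask N"

definition one_particle :: "nat \<Rightarrow> nat \<Rightarrow> nat" where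
  "one_particle N j = unset_bit j (vacuum N)"

lemma vacuum_less_two_power: "vacuum N < 2 ^ N"
  by simp

lemma bit_one_particle: "bit (one_particle N j) l \<longleftrightarrow> l < N \<and> l \<noteq> j"
  by (auto simp: one_particle_def bit_unset_bit_iff bit_mask_iff)

lemma one_particle_less_two_power: "one_particle N j < 2 ^ N"
  unfolding one_particle_def by (rule unset_bit_less_two_power[OF vacuum_less_two_power])

lemma one_particle_eq_iff: "i < N \<Longrightarrow> j < N \<Longrightarrow> one_particle N i = one_particle N j \<longleftrightarrow> i = j"
  by (metis bit_one_particle)

lemma hopping_mult_vacuum: "Suc k < N \<Longrightarrow> hopping N k *\<^sub>v unit_vec (2 ^ N) (vacuum N) = 0\<^sub>v (2 ^ N)"
  by (subst hopping_mult_unit_vec) (auto simp: bit_mask_iff)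

lemma hopping_mult_one_particle:
  assumes "Suc k < N" "j < N"
  shows "hopping N k *\<^sub>v unit_vec (2 ^ N) (one_particle N j) =
    (if k = j then 2 \<cdot>\<^sub>v unit_vec (2 ^ N) (one_particle N (Suc j))
     else if Suc k = j then 2 \<cdot>\<^sub>v unit_vec (2 ^ N) (one_particle N k) else 0\<^sub>v (2 ^ N))"
proof -
  have "flip_bit j (flip_bit (Suc j) (one_particle N j)) = one_particle N (Suc j)" if "Suc j < N"
    using that by (intro bit_eqI) (auto simp: bit_flip_bit bit_one_particle)
  moreover have "flip_bit k (flip_bit (Suc k) (one_particle N (Suc k))) = one_particle N k"
    using assms by (intro bit_eqI) (auto simp: bit_flip_bit bit_one_particle)
  ultimately show ?thesis
    using assms by (subst hopping_mult_unit_vec) (auto simp: bit_one_particle one_particle_less_two_power)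
qed

section \<open>The Hamiltonian on the vacuum and one-particle sectors\<close>

lemma sum_list_map_upto: "sum_list (map g [m..m + int K - 1]) = (\<Sum>k<K. g (m + int k))"
proof (induction K)
  case (Suc K)
  have "[m..m + int (Suc K) - 1] = [m..m + int K - 1] @ [m + int K]"
    using upto_rec2[of m "m + int K"] by simp
  then show ?case using Suc by simp
qed simp

lemma msum_carrier: "(\<And>x. f x \<in> carrier_mat D D) \<Longrightarrow> msum D f xs \<in> carrier_mat D D"
  by (induction xs) (auto simp: msum_def)

lemma index_msum_mult_vec:
  assumes f: "\<And>x. f x \<in> carrier_mat D D" and v: "v \<in> carrier_vec D" and i: "i < D"
  shows "(msum D f xs *\<^sub>v v) $ i = sum_list (map (\<lambda>x. (f x *\<^sub>v v) $ i) xs)"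
proof (induction xs)
  case Nil then show ?case using i v by (simp add: msum_def scalar_prod_def)
next
  case (Cons x xs)
  have "msum D f (x # xs) *\<^sub>v v = f x *\<^sub>v v + msum D f xs *\<^sub>v v"
    using f v msum_carrier[OF f] by (simp add: msum_def add_mult_distrib_mat_vec[of _ D D])
  moreover have "msum D f xs \<in> carrier_mat D D" by (rule msum_carrier[OF f])
  ultimately show ?case using Cons i f by simp
qed

lemma index_uminus_minus_mult_vec:
  fixes A B :: "'a :: comm_ring mat"
  assumes "A \<in> carrier_mat D D" "B \<in> carrier_mat D D" "v \<in> carrier_vec D" "i < D"
  shows "((- A - B) *\<^sub>v v) $ i = - (A *\<^sub>v v) $ i - (B *\<^sub>v v) $ i"
  using assms
  by (simp add: index_mult_mat_vec_sum[of _ D D] sum_negf[symmetric] sum_subtractf[symmetric] algebra_simps)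

lemma sig_site: "sig m n A (m + int k) = site_op (nsites m n) k A"
  by (simp add: sig_def)

lemma sig_next_site: "sig m n A (m + int k + 1) = site_op (nsites m n) (Suc k) A"
  by (simp add: sig_def nat_add_distrib)

lemma H_Lambda_carrier: "H_Lambda m n \<nu> \<in> carrier_mat (2 ^ nsites m n) (2 ^ nsites m n)"
  unfolding H_Lambda_def sig_def
  by (intro minus_carrier_mat uminus_carrier_mat msum_carrier add_carrier_mat
      mult_carrier_mat[of _ "2 ^ nsites m n" "2 ^ nsites m n"] smult_carrier_mat site_op_carrier)

lemma index_H_Lambda_mult_vec:
  assumes mn: "m \<le> n" and v: "v \<in> carrier_vec (2 ^ nsites m n)" and i: "i < 2 ^ nsites m n"
  shows "(H_Lambda m n \<nu> *\<^sub>v v) $ i =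
     - (\<Sum>k<nsites m n - 1. (hopping (nsites m n) k *\<^sub>v v) $ i)
     - (\<Sum>k<nsites m n. complex_of_real (\<nu> (m + int k)) * (site_op (nsites m n) k pauli_z *\<^sub>v v) $ i)"
proof -
  let ?N = "nsites m n" and ?D = "2 ^ nsites m n"
  let ?f = "\<lambda>j. sig m n pauli_x j * sig m n pauli_x (j + 1) + sig m n pauli_y j * sig m n pauli_y (j + 1)"
  let ?g = "\<lambda>j. complex_of_real (\<nu> j) \<cdot>\<^sub>m sig m n pauli_z j"
  have f: "?f j \<in> carrier_mat ?D ?D" and g: "?g j \<in> carrier_mat ?D ?D" for j
    unfolding sig_def by (intro add_carrier_mat mult_carrier_mat[of _ ?D ?D] site_op_carrier) simp
  have n1: "n - 1 = m + int (?N - 1) - 1" and n2: "n = m + int ?N - 1"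
    using mn by (simp_all add: nsites_def)
  have "(H_Lambda m n \<nu> *\<^sub>v v) $ i = - (msum ?D ?f [m..n - 1] *\<^sub>v v) $ i - (msum ?D ?g [m..n] *\<^sub>v v) $ i"
    unfolding H_Lambda_def by (rule index_uminus_minus_mult_vec) (use msum_carrier f g v i in auto)
  also have "(msum ?D ?f [m..n - 1] *\<^sub>v v) $ i = (\<Sum>k<?N - 1. (hopping ?N k *\<^sub>v v) $ i)"
    unfolding index_msum_mult_vec[OF f v i] n1 sum_list_map_upto
    by (simp add: hopping_def sig_site sig_next_site del: of_nat_diff)
  also have "(msum ?D ?g [m..n] *\<^sub>v v) $ i
      = (\<Sum>k<?N. complex_of_real (\<nu> (m + int k)) * (site_op ?N k pauli_z *\<^sub>v v) $ i)"
    unfolding index_msum_mult_vec[OF g v i] arg_cong[of _ _ "\<lambda>x. [m..x]", OF n2] sum_list_map_upto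
    using v i by (simp add: index_mult_mat_vec_sum[of _ ?D ?D] sum_distrib_left sig_site algebra_simps)
  finally show ?thesis .
qed

definition vacuum_energy :: "int \<Rightarrow> int \<Rightarrow> (int \<Rightarrow> real) \<Rightarrow> real" where
  "vacuum_energy m n \<nu> = (\<Sum>k<nsites m n. \<nu> (m + int k))"

lemma index_site_op_pauli_z_mult_unit_vec:
  "k < N \<Longrightarrow> b < 2 ^ N \<Longrightarrow> i < 2 ^ N \<Longrightarrow>
   (site_op N k pauli_z *\<^sub>v unit_vec (2 ^ N) b) $ i = (if i = b then (if bit b k then -1 else 1) else 0)"
  by (simp add: site_op_pauli_z_mult_unit_vec)

lemma H_Lambda_mult_vacuum:
  assumes mn: "m \<le> n"
  shows "H_Lambda m n \<nu> *\<^sub>v unit_vec (2 ^ nsites m n) (vacuum (nsites m n))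
       = complex_of_real (vacuum_energy m n \<nu>) \<cdot>\<^sub>v unit_vec (2 ^ nsites m n) (vacuum (nsites m n))"
proof (rule eq_vecI)
  let ?N = "nsites m n"
  fix i assume "i < dim_vec (complex_of_real (vacuum_energy m n \<nu>) \<cdot>\<^sub>v unit_vec (2 ^ ?N) (vacuum ?N))"
  then have i: "i < 2 ^ ?N" by simp
  have "(\<Sum>k<?N - 1. (hopping ?N k *\<^sub>v unit_vec (2 ^ ?N) (vacuum ?N)) $ i) = 0"
    using i by (intro sum.neutral) (auto simp: hopping_mult_vacuum)
  moreover have "(\<Sum>k<?N. complex_of_real (\<nu> (m + int k)) * (site_op ?N k pauli_z *\<^sub>v unit_vec (2 ^ ?N) (vacuum ?N)) $ i)
      = (\<Sum>k<?N. if i = vacuum ?N then - complex_of_real (\<nu> (m + int k)) else 0)"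
  proof (intro sum.cong refl)
    fix k assume "k \<in> {..<?N}"
    then have k: "k < ?N" by simp
    show "complex_of_real (\<nu> (m + int k)) * (site_op ?N k pauli_z *\<^sub>v unit_vec (2 ^ ?N) (vacuum ?N)) $ i
      = (if i = vacuum ?N then - complex_of_real (\<nu> (m + int k)) else 0)"
      unfolding index_site_op_pauli_z_mult_unit_vec[OF k vacuum_less_two_power i]
      using k by (auto simp: bit_mask_iff)
  qed
  ultimately show "(H_Lambda m n \<nu> *\<^sub>v unit_vec (2 ^ ?N) (vacuum ?N)) $ i
      = (complex_of_real (vacuum_energy m n \<nu>) \<cdot>\<^sub>v unit_vec (2 ^ ?N) (vacuum ?N)) $ i"
    using i by (simp add: index_H_Lambda_mult_vec[OF mn] vacuum_energy_def sum_negf)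
qed (use H_Lambda_carrier[of m n \<nu>] in simp)

lemma index_H_Lambda_one_particle:
  assumes mn: "m \<le> n" and i: "i < 2 ^ nsites m n" and j: "j < nsites m n"
  shows "(H_Lambda m n \<nu> *\<^sub>v unit_vec (2 ^ nsites m n) (one_particle (nsites m n) j)) $ i
       = (if i = one_particle (nsites m n) j
          then complex_of_real (vacuum_energy m n \<nu> - 2 * \<nu> (m + int j)) else 0)
       + (if Suc j < nsites m n \<and> i = one_particle (nsites m n) (Suc j) then -2 else 0)
       + (if 0 < j \<and> i = one_particle (nsites m n) (j - 1) then -2 else 0)"
proof -
  let ?N = "nsites m n"
  let ?e = "unit_vec (2 ^ ?N) (one_particle ?N j)"
  have "(\<Sum>k<?N - 1. (hopping ?N k *\<^sub>v ?e) $ i)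
     = (\<Sum>k<?N - 1. (if k = j then (if i = one_particle ?N (Suc j) then 2 else 0) else 0)
                   + (if k = j - 1 then (if 0 < j \<and> i = one_particle ?N k then 2 else 0) else 0))"
  proof (intro sum.cong refl)
    fix k assume "k \<in> {..<?N - 1}"
    then have k: "Suc k < ?N" by simp
    have lt: "one_particle ?N x < 2 ^ ?N" for x by (rule one_particle_less_two_power)
    consider "k = j" | "Suc k = j" | "k \<noteq> j" "Suc k \<noteq> j" by blast
    then show "(hopping ?N k *\<^sub>v ?e) $ i
        = (if k = j then (if i = one_particle ?N (Suc j) then 2 else 0) else 0)
        + (if k = j - 1 then (if 0 < j \<and> i = one_particle ?N k then 2 else 0) else 0)"
    proof cases
      case 1 then show ?thesis unfolding hopping_mult_one_particle[OF k j] using i lt by auto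
    next
      case 2 then have "k = j - 1" "0 < j" "k \<noteq> j" by simp_all
      then show ?thesis unfolding hopping_mult_one_particle[OF k j] using i lt 2 by simp
    next
      case 3 then have "k \<noteq> j - 1 \<or> j = 0" by linarith
      then show ?thesis unfolding hopping_mult_one_particle[OF k j] using i lt 3 by auto
    qed
  qed
  also have "\<dots> = (if Suc j < ?N \<and> i = one_particle ?N (Suc j) then 2 else 0)
                 + (if 0 < j \<and> i = one_particle ?N (j - 1) then 2 else 0)"
  proof -
    have "(\<Sum>k<?N - 1. (if k = j then (if i = one_particle ?N (Suc j) then 2 else 0) else 0 :: complex))
       = (if Suc j < ?N \<and> i = one_particle ?N (Suc j) then 2 else 0)"
      by (subst sum.delta) auto
    moreover have "(\<Sum>k<?N - 1. (if k = j - 1 then (if 0 < j \<and> i = one_particle ?N k then 2 else 0) else 0 :: complex))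
       = (if 0 < j \<and> i = one_particle ?N (j - 1) then 2 else 0)"
      using j by (subst sum.delta) auto
    ultimately show ?thesis by (simp only: sum.distrib)
  qed
  finally have hop: "(\<Sum>k<?N - 1. (hopping ?N k *\<^sub>v ?e) $ i)
      = (if Suc j < ?N \<and> i = one_particle ?N (Suc j) then 2 else 0)
      + (if 0 < j \<and> i = one_particle ?N (j - 1) then 2 else 0)" .
  have "(\<Sum>k<?N. complex_of_real (\<nu> (m + int k)) * (site_op ?N k pauli_z *\<^sub>v ?e) $ i)
      = (\<Sum>k<?N. if i = one_particle ?N j
          then (if k = j then 2 * complex_of_real (\<nu> (m + int k)) else 0) - complex_of_real (\<nu> (m + int k))
          else 0)"
  proof (intro sum.cong refl)
    fix k assume "k \<in> {..<?N}"
    then have k: "k < ?N" by simp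
    show "complex_of_real (\<nu> (m + int k)) * (site_op ?N k pauli_z *\<^sub>v ?e) $ i
      = (if i = one_particle ?N j
          then (if k = j then 2 * complex_of_real (\<nu> (m + int k)) else 0) - complex_of_real (\<nu> (m + int k))
          else 0)"
      unfolding index_site_op_pauli_z_mult_unit_vec[OF k one_particle_less_two_power i]
      using k by (auto simp: bit_one_particle)
  qed
  also have "\<dots> = (if i = one_particle ?N j
      then 2 * complex_of_real (\<nu> (m + int j)) - complex_of_real (vacuum_energy m n \<nu>) else 0)"
    using j by (simp add: vacuum_energy_def sum_subtractf sum.delta)
  finally have z: "(\<Sum>k<?N. complex_of_real (\<nu> (m + int k)) * (site_op ?N k pauli_z *\<^sub>v ?e) $ i)
      = (if i = one_particle ?N j
         then 2 * complex_of_real (\<nu> (m + int j)) - complex_of_real (vacuum_energy m n \<nu>) else 0)" .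
  show ?thesis
    unfolding index_H_Lambda_mult_vec[OF mn unit_vec_carrier i] hop z
    by (cases "i = one_particle ?N j") simp_all
qed

definition one_particle_embedding :: "nat \<Rightarrow> complex mat" where
  "one_particle_embedding N = mat (2 ^ N) N (\<lambda>(a,p). if a = one_particle N p then 1 else 0)"

definition one_particle_hamiltonian :: "int \<Rightarrow> int \<Rightarrow> (int \<Rightarrow> real) \<Rightarrow> complex mat" where
  "one_particle_hamiltonian m n \<nu> =
     complex_of_real (vacuum_energy m n \<nu>) \<cdot>\<^sub>m 1\<^sub>m (nsites m n) + (- 2) \<cdot>\<^sub>m H_eff m n \<nu>"

lemma one_particle_embedding_carrier: "one_particle_embedding N \<in> carrier_mat (2 ^ N) N"
  by (simp add: one_particle_embedding_def)

lemma one_particle_hamiltonian_carrier: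
  "one_particle_hamiltonian m n \<nu> \<in> carrier_mat (nsites m n) (nsites m n)"
  by (simp add: one_particle_hamiltonian_def H_eff_def)

lemma col_one_particle_embedding:
  "q < N \<Longrightarrow> col (one_particle_embedding N) q = unit_vec (2 ^ N) (one_particle N q)"
  by (rule eq_vecI) (auto simp: one_particle_embedding_def one_particle_less_two_power)

lemma index_one_particle_hamiltonian:
  "p < nsites m n \<Longrightarrow> q < nsites m n \<Longrightarrow> one_particle_hamiltonian m n \<nu> $$ (p,q) =
    (if p = q then complex_of_real (vacuum_energy m n \<nu> - 2 * \<nu> (m + int p))
     else if p = Suc q \<or> q = Suc p then -2 else 0)"
  by (simp add: one_particle_hamiltonian_def H_eff_def)

lemma H_Lambda_one_particle_intertwine:
  assumes mn: "m \<le> n"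
  shows "H_Lambda m n \<nu> * one_particle_embedding (nsites m n)
       = one_particle_embedding (nsites m n) * one_particle_hamiltonian m n \<nu>"
    (is "_ * ?P = ?P * ?K")
proof (rule eq_matI)
  let ?N = "nsites m n"
  fix a q assume "a < dim_row (?P * ?K)" "q < dim_col (?P * ?K)"
  then have a: "a < 2 ^ ?N" and q: "q < ?N"
    by (auto simp: one_particle_embedding_def one_particle_hamiltonian_def H_eff_def)
  have "(H_Lambda m n \<nu> * ?P) $$ (a,q) = (H_Lambda m n \<nu> *\<^sub>v unit_vec (2 ^ ?N) (one_particle ?N q)) $ a"
    using H_Lambda_carrier[of m n \<nu>] a q
    by (simp add: col_one_particle_embedding[OF q, symmetric] one_particle_embedding_def)
  also have "\<dots> = (\<Sum>p<?N. (if a = one_particle ?N p then 1 else 0) * ?K $$ (p,q))"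
  proof (cases "\<exists>p0<?N. a = one_particle ?N p0")
    case True
    then obtain p0 where p0: "p0 < ?N" "a = one_particle ?N p0" by blast
    have "(\<Sum>p<?N. (if a = one_particle ?N p then 1 else 0) * ?K $$ (p,q))
        = (\<Sum>p<?N. if p = p0 then ?K $$ (p,q) else 0)"
    proof (intro sum.cong refl)
      fix p assume "p \<in> {..<?N}"
      then have "(a = one_particle ?N p) = (p = p0)" using p0 one_particle_eq_iff[of p ?N p0] by auto
      then show "(if a = one_particle ?N p then 1 else 0) * ?K $$ (p,q) = (if p = p0 then ?K $$ (p,q) else 0)"
        by simp
    qed
    also have "\<dots> = ?K $$ (p0,q)" using p0 by (subst sum.delta) auto
    finally have s: "(\<Sum>p<?N. (if a = one_particle ?N p then 1 else 0) * ?K $$ (p,q)) = ?K $$ (p0,q)" .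
    have e1: "a = one_particle ?N q \<longleftrightarrow> p0 = q"
      using p0 q one_particle_eq_iff by auto
    have e2: "Suc q < ?N \<and> a = one_particle ?N (Suc q) \<longleftrightarrow> p0 = Suc q"
      using p0 q one_particle_eq_iff by auto
    have e3: "0 < q \<and> a = one_particle ?N (q - 1) \<longleftrightarrow> Suc p0 = q"
      using p0 q one_particle_eq_iff[of p0 ?N "q - 1"] by auto
    show ?thesis
      unfolding s index_H_Lambda_one_particle[OF mn a q] e1 e2 e3
      using p0 q by (auto simp: index_one_particle_hamiltonian)
  next
    case False
    then have "(\<Sum>p<?N. (if a = one_particle ?N p then 1 else 0) * ?K $$ (p,q)) = 0"
      by (intro sum.neutral) auto
    moreover have "\<not> a = one_particle ?N q" "\<not> (Suc q < ?N \<and> a = one_particle ?N (Suc q))"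
      "\<not> (0 < q \<and> a = one_particle ?N (q - 1))"
      using False q by auto
    ultimately show ?thesis
      unfolding index_H_Lambda_one_particle[OF mn a q] by simp
  qed
  also have "\<dots> = (?P * ?K) $$ (a,q)"
    using a q one_particle_hamiltonian_carrier
    by (subst index_mult_mat_sum[of _ "2 ^ ?N" ?N _ ?N]) (auto simp: one_particle_embedding_def)
  finally show "(H_Lambda m n \<nu> * ?P) $$ (a,q) = (?P * ?K) $$ (a,q)" .
qed (use H_Lambda_carrier[of m n \<nu>] one_particle_hamiltonian_carrier[of m n \<nu>]
      in \<open>auto simp: one_particle_embedding_def\<close>)

lemma smult_mat_mult_mat_vec:
  fixes A :: "'a :: comm_ring_1 mat"
  assumes "A \<in> carrier_mat nr nc" "v \<in> carrier_vec nc"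
  shows "(k \<cdot>\<^sub>m A) *\<^sub>v v = k \<cdot>\<^sub>v (A *\<^sub>v v)"
  using assms by (intro eq_vecI) (auto simp: index_mult_mat_vec_sum[of _ nr nc] sum_distrib_left mult.assoc)

lemma mexp_smult_H_Lambda_carrier:
  "mexp (s \<cdot>\<^sub>m H_Lambda m n \<nu>) \<in> carrier_mat (2 ^ nsites m n) (2 ^ nsites m n)"
  using H_Lambda_carrier by (intro mexp_carrier) simp

lemma mexp_H_Lambda_mult_vacuum:
  assumes "m \<le> n"
  shows "mexp (s \<cdot>\<^sub>m H_Lambda m n \<nu>) *\<^sub>v unit_vec (2 ^ nsites m n) (vacuum (nsites m n))
     = exp (s * complex_of_real (vacuum_energy m n \<nu>)) \<cdot>\<^sub>v unit_vec (2 ^ nsites m n) (vacuum (nsites m n))"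
proof (rule mexp_mult_eigenvector)
  show "s \<cdot>\<^sub>m H_Lambda m n \<nu> \<in> carrier_mat (2 ^ nsites m n) (2 ^ nsites m n)"
    using H_Lambda_carrier by simp
  show "(s \<cdot>\<^sub>m H_Lambda m n \<nu>) *\<^sub>v unit_vec (2 ^ nsites m n) (vacuum (nsites m n))
      = (s * complex_of_real (vacuum_energy m n \<nu>)) \<cdot>\<^sub>v unit_vec (2 ^ nsites m n) (vacuum (nsites m n))"
    using H_Lambda_carrier[of m n \<nu>]
    by (simp add: smult_mat_mult_mat_vec H_Lambda_mult_vacuum[OF assms] smult_smult_assoc)
qed simp

lemma mexp_H_Lambda_mult_one_particle:
  assumes mn: "m \<le> n" and R: "R < nsites m n"
  shows "mexp (s \<cdot>\<^sub>m H_Lambda m n \<nu>) *\<^sub>v unit_vec (2 ^ nsites m n) (one_particle (nsites m n) R)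
     = one_particle_embedding (nsites m n) *\<^sub>v col (mexp (s \<cdot>\<^sub>m one_particle_hamiltonian m n \<nu>)) R"
proof -
  let ?N = "nsites m n" and ?P = "one_particle_embedding (nsites m n)"
  let ?K = "s \<cdot>\<^sub>m one_particle_hamiltonian m n \<nu>"
  have P: "?P \<in> carrier_mat (2 ^ ?N) ?N" by (rule one_particle_embedding_carrier)
  have K: "?K \<in> carrier_mat ?N ?N" using one_particle_hamiltonian_carrier by simp
  have "(s \<cdot>\<^sub>m H_Lambda m n \<nu>) * ?P = s \<cdot>\<^sub>m (H_Lambda m n \<nu> * ?P)"
    by (rule mult_smult_assoc_mat[OF H_Lambda_carrier P])
  also have "\<dots> = ?P * ?K"
    by (simp add: H_Lambda_one_particle_intertwine[OF mn]
        mult_smult_distrib[OF P one_particle_hamiltonian_carrier])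
  finally have intertwine: "mexp (s \<cdot>\<^sub>m H_Lambda m n \<nu>) * ?P = ?P * mexp ?K"
    by (intro mexp_intertwine[OF _ P K]) (use H_Lambda_carrier in simp)
  have "mexp (s \<cdot>\<^sub>m H_Lambda m n \<nu>) *\<^sub>v unit_vec (2 ^ ?N) (one_particle ?N R)
      = col (mexp (s \<cdot>\<^sub>m H_Lambda m n \<nu>) * ?P) R"
    using col_mult2[OF mexp_smult_H_Lambda_carrier P R] by (simp add: col_one_particle_embedding[OF R])
  also have "\<dots> = col (?P * mexp ?K) R" by (simp only: intertwine)
  also have "\<dots> = ?P *\<^sub>v col (mexp ?K) R" by (rule col_mult2[OF P mexp_carrier[OF K] R])
  finally show ?thesis .
qed

section \<open>Jordan--Wigner operators on the low-particle sectors\<close>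

lemma jordan_wigner_string_carrier:
  "B \<in> carrier_mat (2 ^ nsites m n) (2 ^ nsites m n) \<Longrightarrow>
   foldr (\<lambda>i M. sig m n pauli_z i * M) xs B \<in> carrier_mat (2 ^ nsites m n) (2 ^ nsites m n)"
  by (induction xs) (auto simp: sig_def)

lemma jordan_wigner_string_mult_vec:
  assumes xs: "\<forall>x\<in>set xs. m \<le> x \<and> nat (x - m) < nsites m n"
    and B: "B \<in> carrier_mat (2 ^ nsites m n) (2 ^ nsites m n)" and w: "w \<in> carrier_vec (2 ^ nsites m n)"
    and Bw: "B *\<^sub>v w = c \<cdot>\<^sub>v unit_vec (2 ^ nsites m n) (vacuum (nsites m n))"
  shows "foldr (\<lambda>i M. sig m n pauli_z i * M) xs B *\<^sub>v w
       = ((-1) ^ length xs * c) \<cdot>\<^sub>v unit_vec (2 ^ nsites m n) (vacuum (nsites m n))"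
  using xs
proof (induction xs)
  case Nil then show ?case using Bw by simp
next
  case (Cons x xs)
  let ?N = "nsites m n" and ?D = "2 ^ nsites m n"
  let ?F = "foldr (\<lambda>i M. sig m n pauli_z i * M) xs B"
  have F: "?F \<in> carrier_mat ?D ?D" by (rule jordan_wigner_string_carrier[OF B])
  have Z: "sig m n pauli_z x \<in> carrier_mat ?D ?D" by (simp add: sig_def)
  have x: "nat (x - m) < ?N" using Cons.prems by simp
  have "(sig m n pauli_z x * ?F) *\<^sub>v w = ((-1) ^ length xs * c) \<cdot>\<^sub>v (sig m n pauli_z x *\<^sub>v unit_vec ?D (vacuum ?N))"
    using Z F w Cons by (simp add: mult_mat_vec[OF Z])
  also have "\<dots> = ((-1) ^ length (x # xs) * c) \<cdot>\<^sub>v unit_vec ?D (vacuum ?N)"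
    unfolding sig_def site_op_pauli_z_mult_unit_vec[OF x vacuum_less_two_power]
    by (rule eq_vecI) (auto simp: bit_mask_iff x)
  finally show ?case by simp
qed

lemma c_op_carrier: "c_op m n l \<in> carrier_mat (2 ^ nsites m n) (2 ^ nsites m n)"
  unfolding c_op_def by (intro jordan_wigner_string_carrier) (simp add: a_op_eq_sig_sigma_minus sig_def)

lemma c_op_mult_basis_vec:
  assumes ml: "m \<le> l" and ln: "l \<le> n" and b: "b < 2 ^ nsites m n"
    and a: "a_op m n l *\<^sub>v unit_vec (2 ^ nsites m n) b = c \<cdot>\<^sub>v unit_vec (2 ^ nsites m n) (vacuum (nsites m n))"
  shows "c_op m n l *\<^sub>v unit_vec (2 ^ nsites m n) b
       = ((-1) ^ nat (l - m) * c) \<cdot>\<^sub>v unit_vec (2 ^ nsites m n) (vacuum (nsites m n))"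
proof -
  have "\<forall>x\<in>set [m..l - 1]. m \<le> x \<and> nat (x - m) < nsites m n" using ln by (auto simp: nsites_def)
  moreover have "a_op m n l \<in> carrier_mat (2 ^ nsites m n) (2 ^ nsites m n)"
    by (simp add: a_op_eq_sig_sigma_minus sig_def)
  ultimately show ?thesis
    unfolding c_op_def using jordan_wigner_string_mult_vec[OF _ _ unit_vec_carrier a] b ml by simp
qed

lemma c_op_mult_vacuum:
  assumes "m \<le> l" "l \<le> n"
  shows "c_op m n l *\<^sub>v unit_vec (2 ^ nsites m n) (vacuum (nsites m n)) = 0\<^sub>v (2 ^ nsites m n)"
proof -
  have "nat (l - m) < nsites m n" using assms by (simp add: nsites_def)
  then have "a_op m n l *\<^sub>v unit_vec (2 ^ nsites m n) (vacuum (nsites m n))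
      = 0 \<cdot>\<^sub>v unit_vec (2 ^ nsites m n) (vacuum (nsites m n))"
    unfolding a_op_eq_sig_sigma_minus sig_def
    by (subst site_op_sigma_minus_mult_unit_vec) (auto simp: bit_mask_iff intro!: eq_vecI)
  then show ?thesis
    using c_op_mult_basis_vec[OF assms vacuum_less_two_power] by (auto intro!: eq_vecI)
qed

lemma c_op_mult_one_particle:
  assumes "m \<le> l" "l \<le> n" "j < nsites m n"
  shows "c_op m n l *\<^sub>v unit_vec (2 ^ nsites m n) (one_particle (nsites m n) j)
       = ((-1) ^ nat (l - m) * of_bool (j = nat (l - m))) \<cdot>\<^sub>v unit_vec (2 ^ nsites m n) (vacuum (nsites m n))"
proof -
  have L: "nat (l - m) < nsites m n" using assms by (simp add: nsites_def)
  have "set_bit j (one_particle (nsites m n) j) = vacuum (nsites m n)"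
    using assms by (intro bit_eqI) (auto simp: bit_set_bit_iff bit_one_particle bit_mask_iff)
  then have "a_op m n l *\<^sub>v unit_vec (2 ^ nsites m n) (one_particle (nsites m n) j)
      = of_bool (j = nat (l - m)) \<cdot>\<^sub>v unit_vec (2 ^ nsites m n) (vacuum (nsites m n))"
    unfolding a_op_eq_sig_sigma_minus sig_def
    by (subst site_op_sigma_minus_mult_unit_vec[OF L one_particle_less_two_power])
      (auto simp: bit_one_particle L intro!: eq_vecI)
  then show ?thesis
    by (rule c_op_mult_basis_vec[OF assms(1,2) one_particle_less_two_power])
qed

lemma c_op_mult_one_particle_embedding:
  assumes ml: "m \<le> l" and ln: "l \<le> n" and w: "w \<in> carrier_vec (nsites m n)"
  shows "c_op m n l *\<^sub>v (one_particle_embedding (nsites m n) *\<^sub>v w)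
       = ((-1) ^ nat (l - m) * w $ nat (l - m)) \<cdot>\<^sub>v unit_vec (2 ^ nsites m n) (vacuum (nsites m n))"
proof -
  let ?N = "nsites m n" and ?D = "2 ^ nsites m n" and ?L = "nat (l - m)"
  let ?P = "one_particle_embedding ?N"
  have L: "?L < ?N" using ml ln by (simp add: nsites_def)
  have cP: "c_op m n l * ?P = mat ?D ?N (\<lambda>(a,p). if a = vacuum ?N \<and> p = ?L then (-1) ^ ?L else 0)"
  proof (rule eq_matI)
    fix a p assume "a < dim_row (mat ?D ?N (\<lambda>(a,p). if a = vacuum ?N \<and> p = ?L then (-1) ^ ?L else 0 :: complex))"
      "p < dim_col (mat ?D ?N (\<lambda>(a,p). if a = vacuum ?N \<and> p = ?L then (-1) ^ ?L else 0 :: complex))"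
    then have a: "a < ?D" and p: "p < ?N" by auto
    have "(c_op m n l * ?P) $$ (a,p) = (c_op m n l *\<^sub>v unit_vec ?D (one_particle ?N p)) $ a"
      using c_op_carrier[of m n l] one_particle_embedding_carrier[of ?N] a p
      by (simp add: col_one_particle_embedding[OF p, symmetric])
    then show "(c_op m n l * ?P) $$ (a,p)
        = mat ?D ?N (\<lambda>(a,p). if a = vacuum ?N \<and> p = ?L then (-1) ^ ?L else 0) $$ (a,p)"
      using a p by (simp add: c_op_mult_one_particle[OF ml ln p])
  qed (use c_op_carrier[of m n l] one_particle_embedding_carrier[of ?N] in auto)
  show ?thesis
  proof (rule eq_vecI)
    fix a assume "a < dim_vec (((-1) ^ ?L * w $ ?L) \<cdot>\<^sub>v unit_vec ?D (vacuum ?N))"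
    then have a: "a < ?D" by simp
    have "(c_op m n l *\<^sub>v (?P *\<^sub>v w)) $ a = ((c_op m n l * ?P) *\<^sub>v w) $ a"
      by (simp add: assoc_mult_mat_vec[OF c_op_carrier one_particle_embedding_carrier w])
    also have "\<dots> = (\<Sum>p<?N. (c_op m n l * ?P) $$ (a,p) * w $ p)"
      by (rule index_mult_mat_vec_sum[OF _ w a]) (simp add: cP)
    also have "\<dots> = (\<Sum>p<?N. if p = ?L then (if a = vacuum ?N then (-1) ^ ?L * w $ ?L else 0) else 0)"
      by (rule sum.cong[OF refl]) (use a in \<open>auto simp: cP\<close>)
    also have "\<dots> = (((-1) ^ ?L * w $ ?L) \<cdot>\<^sub>v unit_vec ?D (vacuum ?N)) $ a"
      using L a by (subst sum.delta) auto
    finally show "(c_op m n l *\<^sub>v (?P *\<^sub>v w)) $ a = (((-1) ^ ?L * w $ ?L) \<cdot>\<^sub>v unit_vec ?D (vacuum ?N)) $ a" .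
  qed (use c_op_carrier[of m n l] in simp)
qed

lemma c_t_mult_vec:
  assumes "m \<le> l" "l \<le> n" "v \<in> carrier_vec (2 ^ nsites m n)"
  shows "c_t m n \<nu> l t *\<^sub>v v
       = mexp ((\<i> * complex_of_real t) \<cdot>\<^sub>m H_Lambda m n \<nu>)
           *\<^sub>v (c_op m n l *\<^sub>v (mexp ((- \<i> * complex_of_real t) \<cdot>\<^sub>m H_Lambda m n \<nu>) *\<^sub>v v))"
proof -
  let ?Ep = "mexp ((\<i> * complex_of_real t) \<cdot>\<^sub>m H_Lambda m n \<nu>)"
    and ?Em = "mexp ((- \<i> * complex_of_real t) \<cdot>\<^sub>m H_Lambda m n \<nu>)"
  have "(?Ep * c_op m n l * ?Em) *\<^sub>v v = (?Ep * c_op m n l) *\<^sub>v (?Em *\<^sub>v v)"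
    by (rule assoc_mult_mat_vec[OF mult_carrier_mat[OF mexp_smult_H_Lambda_carrier c_op_carrier]
          mexp_smult_H_Lambda_carrier assms(3)])
  also have "\<dots> = ?Ep *\<^sub>v (c_op m n l *\<^sub>v (?Em *\<^sub>v v))"
    by (rule assoc_mult_mat_vec[OF mexp_smult_H_Lambda_carrier c_op_carrier
          mult_mat_vec_carrier[OF mexp_smult_H_Lambda_carrier assms(3)]])
  finally show ?thesis unfolding c_t_def .
qed

lemma c_t_carrier: "c_t m n \<nu> l t \<in> carrier_mat (2 ^ nsites m n) (2 ^ nsites m n)"
  unfolding c_t_def
  by (rule mult_carrier_mat[OF mult_carrier_mat[OF mexp_smult_H_Lambda_carrier c_op_carrier]
        mexp_smult_H_Lambda_carrier])

lemma a_star_carrier: "a_star m n r \<in> carrier_mat (2 ^ nsites m n) (2 ^ nsites m n)"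
  by (simp add: a_star_eq_sig_sigma_plus sig_def)

lemma c_t_mult_vacuum:
  assumes "m \<le> l" "l \<le> n"
  shows "c_t m n \<nu> l t *\<^sub>v unit_vec (2 ^ nsites m n) (vacuum (nsites m n)) = 0\<^sub>v (2 ^ nsites m n)"
proof -
  let ?N = "nsites m n" and ?D = "2 ^ nsites m n"
  have "c_op m n l *\<^sub>v (mexp ((- \<i> * complex_of_real t) \<cdot>\<^sub>m H_Lambda m n \<nu>) *\<^sub>v unit_vec ?D (vacuum ?N))
      = 0\<^sub>v ?D"
    using assms c_op_carrier[of m n l]
    by (auto simp: mexp_H_Lambda_mult_vacuum mult_mat_vec c_op_mult_vacuum intro!: eq_vecI)
  then show ?thesis
    using assms mexp_smult_H_Lambda_carrier[of "\<i> * complex_of_real t" m n \<nu>]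
    by (auto simp: c_t_mult_vec)
qed

lemma c_t_mult_one_particle:
  assumes ml: "m \<le> l" and ln: "l \<le> n" and R: "R < nsites m n"
  shows "c_t m n \<nu> l t *\<^sub>v unit_vec (2 ^ nsites m n) (one_particle (nsites m n) R)
     = ((-1) ^ nat (l - m) * mexp ((- \<i> * complex_of_real t) \<cdot>\<^sub>m one_particle_hamiltonian m n \<nu>) $$ (nat (l - m), R)
          * exp (\<i> * complex_of_real t * complex_of_real (vacuum_energy m n \<nu>)))
       \<cdot>\<^sub>v unit_vec (2 ^ nsites m n) (vacuum (nsites m n))"
proof -
  let ?N = "nsites m n" and ?D = "2 ^ nsites m n" and ?L = "nat (l - m)"
  let ?M = "mexp ((- \<i> * complex_of_real t) \<cdot>\<^sub>m one_particle_hamiltonian m n \<nu>)"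
  have mn: "m \<le> n" using ml ln by simp
  have M: "?M \<in> carrier_mat ?N ?N" using one_particle_hamiltonian_carrier by (intro mexp_carrier) simp
  have L: "?L < ?N" using ml ln by (simp add: nsites_def)
  have "c_op m n l *\<^sub>v (mexp ((- \<i> * complex_of_real t) \<cdot>\<^sub>m H_Lambda m n \<nu>) *\<^sub>v unit_vec ?D (one_particle ?N R))
      = ((-1) ^ ?L * ?M $$ (?L, R)) \<cdot>\<^sub>v unit_vec ?D (vacuum ?N)"
    using M L R
    by (simp add: mexp_H_Lambda_mult_one_particle[OF mn R] c_op_mult_one_particle_embedding[OF ml ln])
  then show ?thesis
    using ml ln mexp_smult_H_Lambda_carrier[of "\<i> * complex_of_real t" m n \<nu>]
    by (simp add: c_t_mult_vec one_particle_less_two_power mult_mat_vec mexp_H_Lambda_mult_vacuum[OF mn]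
        smult_smult_assoc mult.assoc)
qed

lemma hermitian_H_eff: "hermitian_mat (H_eff m n \<nu>)"
  by (auto simp: hermitian_mat_def H_eff_def)

lemma cmod_index_mexp_one_particle_hamiltonian:
  assumes L: "L < nsites m n" and R: "R < nsites m n"
  shows "cmod (mexp ((- \<i> * complex_of_real t) \<cdot>\<^sub>m one_particle_hamiltonian m n \<nu>) $$ (L, R))
       = cmod ((mexp ((- 2 * \<i> * complex_of_real t) \<cdot>\<^sub>m H_eff m n \<nu>) *\<^sub>v unit_vec (nsites m n) L) $ R)"
proof -
  let ?N = "nsites m n" and ?s = "- 2 * \<i> * complex_of_real t"
  let ?c = "- \<i> * complex_of_real t * complex_of_real (vacuum_energy m n \<nu>)"
  have H: "H_eff m n \<nu> \<in> carrier_mat ?N ?N" by (simp add: H_eff_def)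
  have sH: "cnj ?s \<cdot>\<^sub>m H_eff m n \<nu> \<in> carrier_mat ?N ?N" using H by simp
  have "(- \<i> * complex_of_real t) \<cdot>\<^sub>m one_particle_hamiltonian m n \<nu> = cnj ?s \<cdot>\<^sub>m H_eff m n \<nu> + ?c \<cdot>\<^sub>m 1\<^sub>m ?N"
    by (rule eq_matI) (auto simp: one_particle_hamiltonian_def H_eff_def algebra_simps)
  then have "mexp ((- \<i> * complex_of_real t) \<cdot>\<^sub>m one_particle_hamiltonian m n \<nu>) $$ (L, R)
      = (exp ?c \<cdot>\<^sub>m mexp (cnj ?s \<cdot>\<^sub>m H_eff m n \<nu>)) $$ (L, R)"
    by (simp only: mexp_add_scalar[OF sH])
  also have "\<dots> = exp ?c * mexp (cnj ?s \<cdot>\<^sub>m H_eff m n \<nu>) $$ (L, R)"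
    using L R mexp_carrier[OF sH] by (intro index_smult_mat(1)) auto
  also have "mexp (cnj ?s \<cdot>\<^sub>m H_eff m n \<nu>) $$ (L, R) = cnj (mexp (?s \<cdot>\<^sub>m H_eff m n \<nu>) $$ (R, L))"
    by (rule index_mexp_cnj_smult_hermitian[OF H hermitian_H_eff L R])
  also have "mexp (?s \<cdot>\<^sub>m H_eff m n \<nu>) $$ (R, L) = (mexp (?s \<cdot>\<^sub>m H_eff m n \<nu>) *\<^sub>v unit_vec ?N L) $ R"
    using H L R by (intro index_mult_mat_vec_unit_vec[symmetric] mexp_carrier) simp_all
  finally show ?thesis by (simp add: norm_mult norm_exp_eq_Re)
qed

lemma commutator_c_t_a_star_mult_vacuum:
  assumes ml: "m \<le> l" and ln: "l \<le> n" and R: "nat (r - m) < nsites m n"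
  shows "(c_t m n \<nu> l t * a_star m n r - a_star m n r * c_t m n \<nu> l t)
           *\<^sub>v unit_vec (2 ^ nsites m n) (vacuum (nsites m n))
     = ((-1) ^ nat (l - m) * mexp ((- \<i> * complex_of_real t) \<cdot>\<^sub>m one_particle_hamiltonian m n \<nu>) $$ (nat (l - m), nat (r - m))
          * exp (\<i> * complex_of_real t * complex_of_real (vacuum_energy m n \<nu>)))
       \<cdot>\<^sub>v unit_vec (2 ^ nsites m n) (vacuum (nsites m n))"
proof -
  let ?N = "nsites m n" and ?D = "2 ^ nsites m n"
  let ?C = "c_t m n \<nu> l t" and ?A = "a_star m n r" and ?\<Omega> = "unit_vec (2 ^ nsites m n) (vacuum (nsites m n))"
  have C: "?C \<in> carrier_mat ?D ?D" and A: "?A \<in> carrier_mat ?D ?D"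
    by (rule c_t_carrier, rule a_star_carrier)
  have "?A *\<^sub>v ?\<Omega> = unit_vec ?D (one_particle ?N (nat (r - m)))"
    unfolding a_star_eq_sig_sigma_plus sig_def
    by (subst site_op_sigma_plus_mult_unit_vec[OF R vacuum_less_two_power]) (simp add: bit_mask_iff R one_particle_def)
  moreover have "(?C * ?A - ?A * ?C) *\<^sub>v ?\<Omega> = ?C *\<^sub>v (?A *\<^sub>v ?\<Omega>) - ?A *\<^sub>v (?C *\<^sub>v ?\<Omega>)"
    using C A by (simp add: minus_mult_distrib_mat_vec[of _ ?D ?D] assoc_mult_mat_vec[of _ ?D ?D])
  ultimately show ?thesis
    using A by (auto simp: c_t_mult_vacuum[OF ml ln] c_t_mult_one_particle[OF ml ln R] intro!: eq_vecI)
qed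

theorem proposition6p3:
  fixes m n l r :: int and \<nu> :: "int \<Rightarrow> real" and t :: real
  assumes "m \<le> l" and "l \<le> r" and "r \<le> n"
  shows "opnorm (c_t m n \<nu> l t * a_star m n r - a_star m n r * c_t m n \<nu> l t)
           \<ge> cmod ((mexp ((- 2 * \<i> * complex_of_real t) \<cdot>\<^sub>m H_eff m n \<nu>) *\<^sub>v unit_vec (nsites m n) (nat (l - m)))
                     $ nat (r - m))"
proof -
  let ?N = "nsites m n" and ?D = "2 ^ nsites m n" and ?L = "nat (l - m)" and ?R = "nat (r - m)"
  let ?X = "c_t m n \<nu> l t * a_star m n r - a_star m n r * c_t m n \<nu> l t"
  have ln: "l \<le> n" and L: "?L < ?N" and R: "?R < ?N" using assms by (simp_all add: nsites_def)
  have X: "?X \<in> carrier_mat ?D ?D"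
    by (rule minus_carrier_mat[OF mult_carrier_mat[OF a_star_carrier c_t_carrier]])
  have "vnorm (?X *\<^sub>v unit_vec ?D (vacuum ?N))
      = cmod ((mexp ((- 2 * \<i> * complex_of_real t) \<cdot>\<^sub>m H_eff m n \<nu>) *\<^sub>v unit_vec ?N ?L) $ ?R)"
    using cmod_index_mexp_one_particle_hamiltonian[OF L R]
    by (simp add: commutator_c_t_a_star_mult_vacuum[OF assms(1) ln R] vnorm_smult_unit_vec
        norm_mult norm_power norm_exp_eq_Re)
  moreover have "vnorm (?X *\<^sub>v unit_vec ?D (vacuum ?N)) \<le> opnorm ?X"
    using vnorm_smult_unit_vec[OF vacuum_less_two_power, of 1]
    by (intro vnorm_le_opnorm[OF X]) simp_all
  ultimately show ?thesis by simp
qed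

end
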